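(* Let $N \ge 1$ be an integer and let $0 < \delta < \frac{1}{N}$. An $N$-level scalar quantizer is a measurable map $Q:\mathbb{R}\to\mathbb{R}$ whose range consists of $N$ points. For $\alpha>0$ and such a $Q$, define $$D(\alpha, Q) := \mathbb{E}_{X\sim \mathrm{Unif}(0,\alpha)}\big[(X-Q(X))^2\big], \qquad V(Q) := \max_{\alpha \in \{1, 1+\delta\}} D(\alpha, Q).$$ Let $Q_{\vec{p}^*(1)}$ be the $N$-level quantizer that maps each $x\in\mathbb{R}$ to the nearest point of $\{\frac{2k-1}{2N} : k=1,\dots,N\}$. This is the quantizer with $N$ equal-length cells of length $1/N$ partitioning $(0,1)$, each reconstructed at its midpoint. Let $Q^*$ be a minimax $N$-level quantizer, i.e. $Q^* \in \arg\min_{Q \text{ an } N\text{-level quantizer}} V(Q)$. Then $$D(1, Q^* ) > D\big(1, Q_{\vec{p}^*(1)}\big).$$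
   Context: $\mathrm{Unif}(0,\alpha)$ denotes the uniform distribution on $(0,\alpha)$. $D(\alpha,Q)$ is the expected squared-error distortion of $Q$ on $\mathrm{Unif}(0,\alpha)$. $V(Q)$ is the worst-case distortion over the ambiguity set $\{\mathrm{Unif}(0,1), \mathrm{Unif}(0,1+\delta)\}$. *)

theory Defs
  imports "HOL-Analysis.Analysis"
begin

definition is_quantizer :: "nat \<Rightarrow> (real \<Rightarrow> real) \<Rightarrow> bool" where
  "is_quantizer N Q \<longleftrightarrow> Q \<in> borel_measurable borel \<and> finite (range Q) \<and> card (range Q) = N"

definition distortion :: "real \<Rightarrow> (real \<Rightarrow> real) \<Rightarrow> real" where
  "distortion \<alpha> Q = (1 / \<alpha>) * (LINT x : {0<..<\<alpha>} | lborel. (x - Q x)\<^sup>2)"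

definition worst_distortion :: "real \<Rightarrow> (real \<Rightarrow> real) \<Rightarrow> real" where
  "worst_distortion \<delta> Q = max (distortion 1 Q) (distortion (1 + \<delta>) Q)"

text \<open>Nearest-point quantizer onto {(2k-1)/(2N) : k = 1..N}; on a tie (cell boundary
  k/N) the lower point is chosen.  x in ((k-1)/N, k/N] maps to (2k-1)/(2N), clamped to 1..N.\<close>
definition uniform_quantizer :: "nat \<Rightarrow> real \<Rightarrow> real" where
  "uniform_quantizer N x =
     (let k = max 1 (min (int N) \<lceil>real N * x\<rceil>) in (2 * real_of_int k - 1) / (2 * real N))"

end

theory Submission
  imports Defs
begin

(*
  Put a = 1/(2N).  For every point y of a quantizer Q, the bump max 0 (a^2 - (x - y)^2) has
  integral at most 4a^3/3 over [0,1], with strict inequality when y > 1 - a; and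
  (x - Q x)^2 is at least a^2 minus the sum of the bumps of the N points.  Hence
  D(1, Q) >= a^2 - N 4a^3/3 = a^2/3 = D(1, uniform quantizer), strictly if Q has a point
  above 1 - a.

  So if the minimax quantizer Qstar were no worse than the uniform one on Unif(0,1), all its points
  would lie below 1 - a, and its error on [1, 1 + delta] alone forces
  V(Qstar) >= (a^2/3 + ((delta + a)^3 - a^3)/3) / (1 + delta).  Moving the top point of the
  uniform quantizer right by delta/2 gives a quantizer whose distortions on both
  distributions are strictly smaller than this bound, contradicting minimality.
*)

lemma has_integral_shifted_square:
  fixes a b c :: real
  assumes "a \<le> b"
  shows "((\<lambda>x. (x - c)^2) has_integral ((b - c)^3 / 3 - (a - c)^3 / 3)) {a..b}"
proof -
  have "((\<lambda>x. (x - c)^2) has_integral ((\<lambda>x. (x - c)^3 / 3) b - (\<lambda>x. (x - c)^3 / 3) a)) {a..b}"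
    by (rule fundamental_theorem_of_calculus[OF assms])
      (auto intro!: derivative_eq_intros simp: power2_eq_square power3_eq_cube)
  then show ?thesis by simp
qed

lemma set_integrable_square_error:
  fixes Q :: "real \<Rightarrow> real"
  assumes "Q \<in> borel_measurable borel" and "finite (range Q)"
  shows "set_integrable lborel {a<..<b} (\<lambda>x. (x - Q x)^2)"
proof -
  define B where "B = \<bar>a\<bar> + \<bar>b\<bar> + Max (abs ` range Q)"
  have "(x - Q x)^2 \<le> B^2" if "x \<in> {a<..<b}" for x
  proof -
    have "\<bar>Q x\<bar> \<le> Max (abs ` range Q)"
      using assms(2) by (intro Max_ge) auto
    then have "\<bar>x - Q x\<bar> \<le> \<bar>B\<bar>"
      using that unfolding B_def by auto
    then show ?thesis
      by (simp add: abs_le_square_iff)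
  qed
  moreover have "emeasure lborel {a<..<b} < \<infinity>"
    by (rule emeasure_bounded_finite) simp
  ultimately show ?thesis
    unfolding set_integrable_def
    by (intro integrableI_bounded_set_indicator[where B = "B^2"]) (use assms(1) in auto)
qed

lemma square_error_integrable_on:
  fixes Q :: "real \<Rightarrow> real"
  assumes "Q \<in> borel_measurable borel" and "finite (range Q)"
  shows "(\<lambda>x. (x - Q x)^2) integrable_on {a..b}"
  using set_borel_integral_eq_integral(1)[OF set_integrable_square_error[OF assms]]
  by (simp add: integrable_on_Icc_iff_Ioo)

lemma distortion_eq_integral:
  fixes Q :: "real \<Rightarrow> real"
  assumes "Q \<in> borel_measurable borel" and "finite (range Q)" and "0 < \<alpha>"
  shows "distortion \<alpha> Q = integral {0..\<alpha>} (\<lambda>x. (x - Q x)^2) / \<alpha>"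
  using set_borel_integral_eq_integral(2)[OF set_integrable_square_error[OF assms(1,2)]]
  by (simp add: distortion_def integral_open_interval_real)

definition bump :: "real \<Rightarrow> real \<Rightarrow> real" where
  "bump a t = max 0 (a^2 - t^2)"

lemma bump_nonneg: "0 \<le> bump a t"
  by (simp add: bump_def)

lemma continuous_on_bump [continuous_intros]:
  "continuous_on S f \<Longrightarrow> continuous_on S (\<lambda>x. bump a (f x))"
  unfolding bump_def by (intro continuous_intros)

lemma square_ge_bump_sum:
  fixes Y :: "real set"
  assumes "finite Y" and "z \<in> Y"
  shows "a^2 - (\<Sum>y\<in>Y. bump a (x - y)) \<le> (x - z)^2"
proof -
  have "bump a (x - z) \<le> (\<Sum>y\<in>Y. bump a (x - y))"
    using assms by (intro member_le_sum) (auto simp: bump_nonneg)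
  moreover have "a^2 - bump a (x - z) \<le> (x - z)^2"
    \<comment> \<open>the left-hand side is \<open>min (a^2) ((x - z)^2)\<close>\<close>
    by (simp add: bump_def)
  ultimately show ?thesis by linarith
qed

lemma bump_shift_eq:
  assumes "0 \<le> a"
  shows "bump a (x - y) = (if x \<in> {y - a..y + a} then a^2 - (x - y)^2 else 0)"
proof -
  have "x \<in> {y - a..y + a} \<longleftrightarrow> \<bar>x - y\<bar> \<le> \<bar>a\<bar>"
    using assms by auto
  then show ?thesis
    by (simp add: bump_def abs_le_square_iff)
qed

lemma bump_primitive_increment_le:
  fixes a s t :: real
  assumes "-a \<le> s" and "s \<le> t" and "t \<le> a"
  shows "(a^2 * t - t^3 / 3) - (a^2 * s - s^3 / 3) \<le> 4 * a^3 / 3"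
    and "t < a \<Longrightarrow> (a^2 * t - t^3 / 3) - (a^2 * s - s^3 / 3) < 4 * a^3 / 3"
proof -
  have "4 * a^3 / 3 - ((a^2 * t - t^3 / 3) - (a^2 * s - s^3 / 3))
      = (a - t)^2 * (2 * a + t) / 3 + (a + s)^2 * (2 * a - s) / 3"
    by (simp add: power2_eq_square power3_eq_cube field_simps)
  moreover have "0 \<le> (a + s)^2 * (2 * a - s) / 3" and "0 \<le> (a - t)^2 * (2 * a + t) / 3"
    using assms by simp_all
  moreover have "t < a \<Longrightarrow> 0 < (a - t)^2 * (2 * a + t) / 3"
    using assms by simp
  ultimately show "(a^2 * t - t^3 / 3) - (a^2 * s - s^3 / 3) \<le> 4 * a^3 / 3"
    and "t < a \<Longrightarrow> (a^2 * t - t^3 / 3) - (a^2 * s - s^3 / 3) < 4 * a^3 / 3"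
    by linarith+
qed

lemma integral_bump:
  fixes a y p q :: real
  assumes "0 \<le> a"
  defines "s \<equiv> max (y - a) p - y" and "t \<equiv> min (y + a) q - y"
  shows "integral {p..q} (\<lambda>x. bump a (x - y))
           = (if s \<le> t then (a^2 * t - t^3 / 3) - (a^2 * s - s^3 / 3) else 0)"
proof -
  have "integral {p..q} (\<lambda>x. bump a (x - y))
      = integral {max (y - a) p..min (y + a) q} (\<lambda>x. a^2 - (x - y)^2)"
    unfolding bump_shift_eq[OF assms(1)] integral_restrict_Int Int_atLeastAtMost ..
  also have "\<dots> = integral {y + s..y + t} (\<lambda>x. a^2 - (x - y)^2)"
    unfolding s_def t_def by simp
  also have "\<dots> = (if s \<le> t then (a^2 * t - t^3 / 3) - (a^2 * s - s^3 / 3) else 0)"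
  proof (cases "s \<le> t")
    case True
    have "((\<lambda>x. a^2) has_integral a^2 * (t - s)) {y + s..y + t}"
      using has_integral_const_real[of "a^2" "y + s" "y + t"] True by (simp add: mult.commute)
    then have "((\<lambda>x. a^2 - (x - y)^2) has_integral (a^2 * (t - s) - (t^3 / 3 - s^3 / 3)))
        {y + s..y + t}"
      using has_integral_shifted_square[of "y + s" "y + t" y] True
      by (intro has_integral_diff) auto
    then show ?thesis
      using True by (simp add: integral_unique algebra_simps)
  qed simp
  finally show ?thesis .
qed

lemma integral_bump_le:
  assumes "0 < a"
  shows "integral {p..q} (\<lambda>x. bump a (x - y)) \<le> 4 * a^3 / 3"
    and "q < y + a \<Longrightarrow> integral {p..q} (\<lambda>x. bump a (x - y)) < 4 * a^3 / 3"
proof -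
  define s where "s = max (y - a) p - y"
  define t where "t = min (y + a) q - y"
  note eq = integral_bump[OF less_imp_le[OF assms], where y = y and p = p and q = q,
      folded s_def t_def]
  have bounds: "-a \<le> s" "t \<le> a"
    unfolding s_def t_def by auto
  show "integral {p..q} (\<lambda>x. bump a (x - y)) \<le> 4 * a^3 / 3"
    using eq bump_primitive_increment_le(1)[OF bounds(1) _ bounds(2)] assms by auto
  assume "q < y + a"
  then have "t < a" unfolding t_def by auto
  then show "integral {p..q} (\<lambda>x. bump a (x - y)) < 4 * a^3 / 3"
    using eq bump_primitive_increment_le(2)[OF bounds(1) _ bounds(2)] assms by auto
qed

lemma integral_square_error_ge_bump_sum:
  fixes Q :: "real \<Rightarrow> real"
  assumes "Q \<in> borel_measurable borel" and "finite (range Q)" and "p \<le> q"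
  shows "a^2 * (q - p) - (\<Sum>y\<in>range Q. integral {p..q} (\<lambda>x. bump a (x - y)))
           \<le> integral {p..q} (\<lambda>x. (x - Q x)^2)"
proof -
  have bump_int: "(\<lambda>x. bump a (x - y)) integrable_on {p..q}" for y
    by (intro integrable_continuous_real continuous_intros)
  have sum_int: "(\<lambda>x. \<Sum>y\<in>range Q. bump a (x - y)) integrable_on {p..q}"
    using assms(2) bump_int by (intro integrable_sum) auto
  have "a^2 * (q - p) - (\<Sum>y\<in>range Q. integral {p..q} (\<lambda>x. bump a (x - y)))
      = integral {p..q} (\<lambda>x. a^2 - (\<Sum>y\<in>range Q. bump a (x - y)))"
    using assms(2,3) bump_int
    by (simp add: integral_diff[OF integrable_const_ivl sum_int] integral_sum mult.commute)
  also have "\<dots> \<le> integral {p..q} (\<lambda>x. (x - Q x)^2)"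
    using assms(1,2) sum_int
    by (intro integral_le integrable_diff square_error_integrable_on square_ge_bump_sum) auto
  finally show ?thesis .
qed

lemma uniform_quantizer_cell:
  fixes k N :: nat
  assumes "1 \<le> k" and "k \<le> N" and "(real k - 1) / real N < x" and "x \<le> real k / real N"
  shows "uniform_quantizer N x = (2 * real k - 1) / (2 * real N)"
proof -
  have "real N > 0" using assms(1,2) by simp
  then have "\<lceil>real N * x\<rceil> = int k"
    using assms(3,4) by (simp add: ceiling_eq_iff field_simps)
  then show ?thesis
    unfolding uniform_quantizer_def Let_def using assms(1,2) by simp
qed

lemma uniform_quantizer_top:
  assumes "1 \<le> N" and "(real N - 1) / real N < x"
  shows "uniform_quantizer N x = (2 * real N - 1) / (2 * real N)"
proof -
  have "real N > 0" using assms(1) by simp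
  then have "int N \<le> \<lceil>real N * x\<rceil>"
    using assms(2) by (simp add: le_ceiling_iff field_simps)
  then show ?thesis
    unfolding uniform_quantizer_def Let_def using assms(1) by simp
qed

lemma uniform_quantizer_below_top:
  assumes "1 \<le> N" and "0 < x" and "x \<le> (real N - 1) / real N"
  shows "uniform_quantizer N x < (2 * real N - 1) / (2 * real N)"
proof -
  have N: "real N > 0" using assms(1) by simp
  then have "0 < \<lceil>real N * x\<rceil>" using assms(2) by simp
  moreover have "real N * x \<le> real N - 1"
    using N assms(3) by (simp add: field_simps)
  then have "\<lceil>real N * x\<rceil> \<le> int N - 1"
    by (intro ceiling_le) simp
  ultimately show ?thesis
    unfolding uniform_quantizer_def Let_def using N by (simp add: divide_strict_right_mono)
qed

lemma range_uniform_quantizer: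
  assumes "1 \<le> N"
  shows "range (uniform_quantizer N) = (\<lambda>k. (2 * real k - 1) / (2 * real N)) ` {1..N}"
proof
  show "range (uniform_quantizer N) \<subseteq> (\<lambda>k. (2 * real k - 1) / (2 * real N)) ` {1..N}"
  proof
    fix z assume "z \<in> range (uniform_quantizer N)"
    then obtain x where z: "z = uniform_quantizer N x" by auto
    define j where "j = max 1 (min (int N) \<lceil>real N * x\<rceil>)"
    have "z = (2 * real (nat j) - 1) / (2 * real N)" and "nat j \<in> {1..N}"
      unfolding z uniform_quantizer_def Let_def j_def[symmetric]
      using assms by (auto simp: j_def)
    then show "z \<in> (\<lambda>k. (2 * real k - 1) / (2 * real N)) ` {1..N}" by blast
  qed
  show "(\<lambda>k. (2 * real k - 1) / (2 * real N)) ` {1..N} \<subseteq> range (uniform_quantizer N)"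
  proof
    fix z assume "z \<in> (\<lambda>k. (2 * real k - 1) / (2 * real N)) ` {1..N}"
    then obtain k where k: "k \<in> {1..N}" and z: "z = (2 * real k - 1) / (2 * real N)" by auto
    have "real N > 0" using assms by simp
    then have "uniform_quantizer N z = z"
      unfolding z using k by (intro uniform_quantizer_cell) (auto simp: field_simps)
    then show "z \<in> range (uniform_quantizer N)" by (metis rangeI)
  qed
qed

lemma is_quantizer_uniform_quantizer:
  assumes "1 \<le> N"
  shows "is_quantizer N (uniform_quantizer N)"
proof -
  define g where "g i = (2 * real_of_int (max 1 (min (int N) i)) - 1) / (2 * real N)" for i
  have [measurable]: "g \<in> borel_measurable (count_space UNIV)" by simp
  have "uniform_quantizer N = (\<lambda>x. g \<lceil>real N * x\<rceil>)"
    unfolding uniform_quantizer_def g_def by auto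
  then have "uniform_quantizer N \<in> borel_measurable borel" by simp
  moreover have "inj_on (\<lambda>k. (2 * real k - 1) / (2 * real N)) {1..N}"
    using assms by (intro inj_onI) (simp add: field_simps)
  ultimately show ?thesis
    unfolding is_quantizer_def range_uniform_quantizer[OF assms] by (simp add: card_image)
qed

lemma has_integral_uniform_quantizer_cells:
  fixes m N :: nat
  assumes "m \<le> N"
  shows "((\<lambda>x. (x - uniform_quantizer N x)^2) has_integral (real m / (12 * real N^3)))
           {0..real m / real N}"
  using assms
proof (induction m)
  case 0
  then show ?case by (simp add: has_integral_refl)
next
  case (Suc m)
  have N: "real N > 0" using Suc.prems by simp
  define c where "c = (2 * real (Suc m) - 1) / (2 * real N)"
  have le: "real m / real N \<le> real (Suc m) / real N"
    using N by (simp add: divide_right_mono)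
  have "((\<lambda>x. (x - c)^2) has_integral
          ((real (Suc m) / real N - c)^3 / 3 - (real m / real N - c)^3 / 3))
          {real m / real N..real (Suc m) / real N}"
    by (rule has_integral_shifted_square[OF le])
  also have "(real (Suc m) / real N - c)^3 / 3 - (real m / real N - c)^3 / 3 = 1 / (12 * real N^3)"
    unfolding c_def using N by (simp add: power3_eq_cube field_simps)
  finally have "((\<lambda>x. (x - uniform_quantizer N x)^2) has_integral (1 / (12 * real N^3)))
      {real m / real N..real (Suc m) / real N}"
  proof (rule has_integral_spike_finite[where S = "{real m / real N}", rotated 2])
    fix x assume "x \<in> {real m / real N..real (Suc m) / real N} - {real m / real N}"
    then have "uniform_quantizer N x = c"
      unfolding c_def using Suc.prems by (intro uniform_quantizer_cell) auto
    then show "(x - uniform_quantizer N x)^2 = (x - c)^2" by simp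
  qed simp
  with Suc have "((\<lambda>x. (x - uniform_quantizer N x)^2) has_integral
      (real m / (12 * real N^3) + 1 / (12 * real N^3))) {0..real (Suc m) / real N}"
    by (intro has_integral_combine[OF _ le]) auto
  then show ?case by (simp add: add_divide_distrib add.commute)
qed

lemma distortion_uniform_quantizer:
  assumes "1 \<le> N"
  shows "distortion 1 (uniform_quantizer N) = 1 / (12 * real N^2)"
proof -
  have "((\<lambda>x. (x - uniform_quantizer N x)^2) has_integral (1 / (12 * real N^2))) {0..1}"
    using has_integral_uniform_quantizer_cells[of N N] assms
    by (simp add: power3_eq_cube power2_eq_square)
  then show ?thesis
    using is_quantizer_uniform_quantizer[OF assms]
    by (simp add: is_quantizer_def distortion_eq_integral integral_unique)
qed

lemma uniform_quantizer_optimal: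
  assumes "is_quantizer N Q"
  shows "distortion 1 (uniform_quantizer N) \<le> distortion 1 Q"
    and "y \<in> range Q \<Longrightarrow> 1 - 1 / (2 * real N) < y
           \<Longrightarrow> distortion 1 (uniform_quantizer N) < distortion 1 Q"
proof -
  have meas: "Q \<in> borel_measurable borel" and fin: "finite (range Q)" and card: "card (range Q) = N"
    using assms unfolding is_quantizer_def by auto
  then have N: "1 \<le> N"
    using card_gt_0_iff[of "range Q"] by simp
  define a where "a = 1 / (2 * real N)"
  have a: "0 < a" unfolding a_def using N by simp
  define I where "I y = integral {0..1} (\<lambda>x. bump a (x - y))" for y
  have "real N * (4 * a^3 / 3) = 2 * a^2 / 3"
    unfolding a_def using N by (simp add: power2_eq_square power3_eq_cube field_simps)
  then have sum_const: "(\<Sum>y\<in>range Q. 4 * a^3 / 3) = 2 * a^2 / 3"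
    using card by simp
  have DU: "distortion 1 (uniform_quantizer N) = a^2 / 3"
    unfolding distortion_uniform_quantizer[OF N] a_def by (simp add: power2_eq_square)
  have low: "a^2 - (\<Sum>y\<in>range Q. I y) \<le> distortion 1 Q"
    using integral_square_error_ge_bump_sum[OF meas fin, of 0 1 a]
    by (simp add: distortion_eq_integral[OF meas fin] I_def)
  have "(\<Sum>y\<in>range Q. I y) \<le> (\<Sum>y\<in>range Q. 4 * a^3 / 3)"
    unfolding I_def by (intro sum_mono integral_bump_le(1)[OF a])
  then show "distortion 1 (uniform_quantizer N) \<le> distortion 1 Q"
    using low sum_const DU by linarith
  assume "y \<in> range Q" and "1 - 1 / (2 * real N) < y"
  then have "\<exists>y\<in>range Q. I y < 4 * a^3 / 3"
    unfolding I_def a_def[symmetric] using integral_bump_le(2)[OF a, of 1 y 0] by auto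
  with fin have "(\<Sum>y\<in>range Q. I y) < (\<Sum>y\<in>range Q. 4 * a^3 / 3)"
    unfolding I_def by (intro sum_strict_mono_ex1 ballI integral_bump_le(1)[OF a])
  then show "distortion 1 (uniform_quantizer N) < distortion 1 Q"
    using low sum_const DU by linarith
qed

lemma integral_square_error_ge_above_range:
  fixes Q :: "real \<Rightarrow> real"
  assumes "Q \<in> borel_measurable borel" and "finite (range Q)"
    and "range Q \<subseteq> {..c}" and "c \<le> b" and "b \<le> t"
  shows "(t - c)^3 / 3 - (b - c)^3 / 3 \<le> integral {b..t} (\<lambda>x. (x - Q x)^2)"
proof -
  note shifted_square = has_integral_shifted_square[OF assms(5), of c]
  have "integral {b..t} (\<lambda>x. (x - c)^2) \<le> integral {b..t} (\<lambda>x. (x - Q x)^2)"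
  proof (rule integral_le[OF has_integral_integrable[OF shifted_square]
        square_error_integrable_on[OF assms(1,2)]])
    fix x assume "x \<in> {b..t}"
    moreover have "Q x \<le> c" using assms(3) by auto
    ultimately show "(x - c)^2 \<le> (x - Q x)^2"
      using assms(4) by (intro power_mono) auto
  qed
  then show ?thesis
    using integral_unique[OF shifted_square] by simp
qed

lemma worst_distortion_ge_if_unit_optimal:
  assumes "is_quantizer N Q" and "0 < \<delta>"
    and "distortion 1 Q \<le> distortion 1 (uniform_quantizer N)"
  defines "a \<equiv> 1 / (2 * real N)"
  shows "(a^2 / 3 + ((\<delta> + a)^3 - a^3) / 3) / (1 + \<delta>) \<le> worst_distortion \<delta> Q"
proof -
  have meas: "Q \<in> borel_measurable borel" and fin: "finite (range Q)" and card: "card (range Q) = N"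
    using assms(1) unfolding is_quantizer_def by auto
  then have N: "1 \<le> N"
    using card_gt_0_iff[of "range Q"] by simp
  define f where "f = (\<lambda>x. (x - Q x)^2)"
  have "a^2 / 3 = distortion 1 (uniform_quantizer N)"
    unfolding distortion_uniform_quantizer[OF N] a_def by (simp add: power2_eq_square)
  also have "\<dots> \<le> distortion 1 Q"
    by (rule uniform_quantizer_optimal(1)[OF assms(1)])
  finally have head: "a^2 / 3 \<le> integral {0..1} f"
    by (simp add: distortion_eq_integral[OF meas fin] f_def)
  have "y \<le> 1 - a" if "y \<in> range Q" for y
  proof (rule ccontr)
    assume "\<not> y \<le> 1 - a"
    then have "distortion 1 (uniform_quantizer N) < distortion 1 Q"
      using uniform_quantizer_optimal(2)[OF assms(1) that] unfolding a_def by simp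
    with assms(3) show False by simp
  qed
  then have "range Q \<subseteq> {..1 - a}" by auto
  then have tail: "((\<delta> + a)^3 - a^3) / 3 \<le> integral {1..1 + \<delta>} f"
    using integral_square_error_ge_above_range[OF meas fin, of "1 - a" 1 "1 + \<delta>"] assms(2)
    unfolding a_def f_def by (simp add: diff_divide_distrib add.commute)
  have "integral {0..1 + \<delta>} f = integral {0..1} f + integral {1..1 + \<delta>} f"
    using assms(2) square_error_integrable_on[OF meas fin]
    by (intro Henstock_Kurzweil_Integration.integral_combine[symmetric]) (auto simp: f_def)
  then have "a^2 / 3 + ((\<delta> + a)^3 - a^3) / 3 \<le> integral {0..1 + \<delta>} f"
    using head tail by linarith
  then have "(a^2 / 3 + ((\<delta> + a)^3 - a^3) / 3) / (1 + \<delta>) \<le> distortion (1 + \<delta>) Q"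
    using assms(2) by (simp add: distortion_eq_integral[OF meas fin] f_def divide_right_mono)
  then show ?thesis
    unfolding worst_distortion_def by simp
qed

lemma is_quantizer_comp:
  assumes "is_quantizer N Q" and "f \<in> borel_measurable borel" and "inj_on f (range Q)"
  shows "is_quantizer N (f \<circ> Q)"
proof -
  have "range (f \<circ> Q) = f ` range Q" by auto
  then show ?thesis
    using assms measurable_comp[of Q borel borel f borel]
    unfolding is_quantizer_def by (simp add: card_image)
qed

(* The competitor: the uniform quantizer with its top point moved to the midpoint of the
   stretched last cell [(N - 1)/N, 1 + delta]. *)
definition shifted_uniform_quantizer :: "nat \<Rightarrow> real \<Rightarrow> real \<Rightarrow> real" where
  "shifted_uniform_quantizer N \<delta> x =
     (let q = uniform_quantizer N x
      in if q = (2 * real N - 1) / (2 * real N) then q + \<delta> / 2 else q)"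

lemma is_quantizer_shifted_uniform_quantizer:
  assumes "1 \<le> N" and "0 < \<delta>"
  shows "is_quantizer N (shifted_uniform_quantizer N \<delta>)"
proof -
  define m where "m = (2 * real N - 1) / (2 * real N)"
  define f where "f q = (if q = m then q + \<delta> / 2 else q)" for q
  have "shifted_uniform_quantizer N \<delta> = f \<circ> uniform_quantizer N"
    by (simp add: fun_eq_iff shifted_uniform_quantizer_def f_def m_def Let_def)
  moreover have "f \<in> borel_measurable borel"
    unfolding f_def by measurable
  moreover have "inj_on f (range (uniform_quantizer N))"
  proof (rule inj_onI)
    have "real N > 0" using assms(1) by simp
    then have below: "q \<le> m" if "q \<in> range (uniform_quantizer N)" for q
      using that unfolding range_uniform_quantizer[OF assms(1)] m_def
      by (auto simp: divide_right_mono)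
    fix q r assume "q \<in> range (uniform_quantizer N)" "r \<in> range (uniform_quantizer N)" "f q = f r"
    with below[of q] below[of r] assms(2) show "q = r"
      unfolding f_def by (auto split: if_splits)
  qed
  ultimately show ?thesis
    using is_quantizer_comp[OF is_quantizer_uniform_quantizer[OF assms(1)]] by simp
qed

lemma shifted_uniform_quantizer_below_top:
  assumes "1 \<le> N" and "0 < x" and "x \<le> (real N - 1) / real N"
  shows "shifted_uniform_quantizer N \<delta> x = uniform_quantizer N x"
  using uniform_quantizer_below_top[OF assms]
  unfolding shifted_uniform_quantizer_def Let_def by simp

lemma shifted_uniform_quantizer_top:
  assumes "1 \<le> N" and "(real N - 1) / real N < x"
  shows "shifted_uniform_quantizer N \<delta> x = 1 - 1 / (2 * real N) + \<delta> / 2"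
proof -
  have "(2 * real N - 1) / (2 * real N) = 1 - 1 / (2 * real N)"
    using assms(1) by (simp add: field_simps)
  then show ?thesis
    using uniform_quantizer_top[OF assms]
    unfolding shifted_uniform_quantizer_def Let_def by simp
qed

lemma has_integral_shifted_uniform_quantizer:
  assumes "1 \<le> N" and "1 \<le> t"
  defines "a \<equiv> 1 / (2 * real N)"
  shows "((\<lambda>x. (x - shifted_uniform_quantizer N \<delta> x)^2) has_integral
           (a^2 / 3 - 2 * a^3 / 3 + ((t - (1 - a + \<delta> / 2))^3 + (a + \<delta> / 2)^3) / 3)) {0..t}"
proof -
  have N: "real N > 0" using assms(1) by simp
  define b where "b = (real N - 1) / real N"
  define c where "c = 1 - a + \<delta> / 2"
  have b: "0 \<le> b" "b \<le> 1" "b = 1 - 2 * a"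
    unfolding b_def a_def using assms(1) N by (auto simp: field_simps)
  then have bt: "b \<le> t" using assms(2) by simp
  have "real (N - 1) / (12 * real N^3) = a^2 / 3 - 2 * a^3 / 3"
    unfolding a_def using assms(1) N
    by (simp add: of_nat_diff power2_eq_square power3_eq_cube field_simps)
  then have "((\<lambda>x. (x - uniform_quantizer N x)^2) has_integral (a^2 / 3 - 2 * a^3 / 3)) {0..b}"
    using has_integral_uniform_quantizer_cells[of "N - 1" N] assms(1)
    unfolding b_def by (simp add: of_nat_diff)
  then have lower: "((\<lambda>x. (x - shifted_uniform_quantizer N \<delta> x)^2) has_integral
      (a^2 / 3 - 2 * a^3 / 3)) {0..b}"
    by (rule has_integral_spike_finite[where S = "{0}", rotated 2])
      (auto simp: b_def shifted_uniform_quantizer_below_top[OF assms(1)])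
  have "((\<lambda>x. (x - c)^2) has_integral ((t - c)^3 / 3 - (b - c)^3 / 3)) {b..t}"
    by (rule has_integral_shifted_square[OF bt])
  then have upper: "((\<lambda>x. (x - shifted_uniform_quantizer N \<delta> x)^2) has_integral
      ((t - c)^3 / 3 - (b - c)^3 / 3)) {b..t}"
    by (rule has_integral_spike_finite[where S = "{b}", rotated 2])
      (auto simp: b_def c_def a_def shifted_uniform_quantizer_top[OF assms(1)])
  have "b - c = -(a + \<delta> / 2)"
    unfolding b(3) c_def by simp
  then have "(b - c)^3 = -((a + \<delta> / 2)^3)"
    by (metis power_minus_odd odd_numeral)
  then show ?thesis
    using has_integral_combine[OF b(1) bt lower upper] unfolding c_def
    by (simp add: diff_divide_distrib add_divide_distrib algebra_simps)
qed

lemma worst_distortion_shifted_uniform_quantizer_less: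
  assumes "1 \<le> N" and "0 < \<delta>"
  defines "a \<equiv> 1 / (2 * real N)"
  shows "worst_distortion \<delta> (shifted_uniform_quantizer N \<delta>) < (a^2 / 3 + ((\<delta> + a)^3 - a^3) / 3) / (1 + \<delta>)"
proof -
  define T where "T = a^2 / 3 + ((\<delta> + a)^3 - a^3) / 3"
  have a: "0 < a" "a \<le> 1 / 2"
    unfolding a_def using assms(1) by (auto simp: field_simps)
  have "is_quantizer N (shifted_uniform_quantizer N \<delta>)"
    by (rule is_quantizer_shifted_uniform_quantizer[OF assms(1,2)])
  then have meas: "shifted_uniform_quantizer N \<delta> \<in> borel_measurable borel"
    and fin: "finite (range (shifted_uniform_quantizer N \<delta>))"
    unfolding is_quantizer_def by auto
  have "distortion 1 (shifted_uniform_quantizer N \<delta>)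
      = a^2 / 3 - 2 * a^3 / 3 + ((a - \<delta> / 2)^3 + (a + \<delta> / 2)^3) / 3"
    using integral_unique[OF has_integral_shifted_uniform_quantizer[OF assms(1) order_refl]]
    unfolding distortion_eq_integral[OF meas fin zero_less_one] a_def by simp
  also have "\<dots> < T / (1 + \<delta>)"
  proof -
    have "T - (a^2 / 3 - 2 * a^3 / 3 + ((a - \<delta> / 2)^3 + (a + \<delta> / 2)^3) / 3) * (1 + \<delta>)
        = \<delta> * (2 * a^2 / 3 + a * \<delta> / 2 + \<delta>^2 * (1 / 3 - a / 2))"
      unfolding T_def by (simp add: field_simps power2_eq_square power3_eq_cube)
    moreover have "0 < \<delta> * (2 * a^2 / 3 + a * \<delta> / 2 + \<delta>^2 * (1 / 3 - a / 2))"
      using a assms(2) by (intro mult_pos_pos add_pos_nonneg) auto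
    ultimately show ?thesis
      using assms(2) by (simp add: field_simps)
  qed
  finally have D1: "distortion 1 (shifted_uniform_quantizer N \<delta>) < T / (1 + \<delta>)" .
  have "distortion (1 + \<delta>) (shifted_uniform_quantizer N \<delta>)
      = (a^2 / 3 - 2 * a^3 / 3 + 2 * (a + \<delta> / 2)^3 / 3) / (1 + \<delta>)"
    using integral_unique[OF has_integral_shifted_uniform_quantizer[OF assms(1),
          where t = "1 + \<delta>" and \<delta> = \<delta>]] assms(2)
    unfolding distortion_eq_integral[OF meas fin add_pos_pos[OF zero_less_one assms(2)]] a_def
    by (simp add: add.commute)
  also have "\<dots> < T / (1 + \<delta>)"
  proof -
    have "T - (a^2 / 3 - 2 * a^3 / 3 + 2 * (a + \<delta> / 2)^3 / 3) = \<delta>^2 * (a / 2 + \<delta> / 4)"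
      unfolding T_def by (simp add: field_simps power2_eq_square power3_eq_cube)
    moreover have "0 < \<delta>^2 * (a / 2 + \<delta> / 4)"
      using a assms(2) by simp
    ultimately show ?thesis
      using assms(2) by (simp add: divide_strict_right_mono)
  qed
  finally show ?thesis
    using D1 unfolding worst_distortion_def T_def by simp
qed

theorem theorem1:
  fixes N :: nat and \<delta> :: real and Qstar :: "real \<Rightarrow> real"
  assumes "N \<ge> 1"
    and "0 < \<delta>" and "\<delta> < 1 / real N"
    and "is_quantizer N Qstar"
    and "\<And>Q. is_quantizer N Q \<Longrightarrow> worst_distortion \<delta> Qstar \<le> worst_distortion \<delta> Q"
  shows "distortion 1 Qstar > distortion 1 (uniform_quantizer N)"
proof (rule ccontr)
  define a where "a = 1 / (2 * real N)"
  assume "\<not> ?thesis"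
  then have "(a^2 / 3 + ((\<delta> + a)^3 - a^3) / 3) / (1 + \<delta>) \<le> worst_distortion \<delta> Qstar"
    unfolding a_def by (intro worst_distortion_ge_if_unit_optimal[OF assms(4,2)]) simp
  also have "\<dots> \<le> worst_distortion \<delta> (shifted_uniform_quantizer N \<delta>)"
    by (rule assms(5)[OF is_quantizer_shifted_uniform_quantizer[OF assms(1,2)]])
  also have "\<dots> < (a^2 / 3 + ((\<delta> + a)^3 - a^3) / 3) / (1 + \<delta>)"
    unfolding a_def by (rule worst_distortion_shifted_uniform_quantizer_less[OF assms(1,2)])
  finally show False by simp
qed

end
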